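(* Let $(A,\cdot)$ be an associative algebra over a field $\mathbf{k}$ of characteristic $0$ and $N:A\to A$ a Nijenhuis operator. Let $\pi_N\in\mathcal{O}_A(2)$ be given by $\pi_N([1];a,b)=a\cdot N(b)$, $\pi_N([2];a,b)=N(a)\cdot b$, $\pi_N([3];a,b)=-N(a\cdot b)$ (the Maurer–Cartan element encoding the NS-algebra induced by $N$). For $n\ge1$ define $\Theta_n:\mathrm{Hom}(A^{\otimes n},A)\to\mathcal{O}_A(n+1)$ by $$\Theta_n(f)([r];a_1,\dots,a_{n+1})=\begin{cases}(-1)^{n+1}a_1\cdot f(a_2,\dots,a_{n+1}) & r=1,\\ 0 & 2\le r\le n,\\ f(a_1,\dots,a_n)\cdot a_{n+1} & r=n+1,\\ \sum_{i=1}^n(-1)^{n+i+1}f(a_1,\dots,a_i\cdot a_{i+1},\dots,a_{n+1}) & r=n+2.\end{cases}$$ Then $\delta_{\pi_N}\circ\Theta_n=\Theta_{n+1}\circ d_N$ for all $n\ge1$, so $\{\Theta_n\}_{n\ge1}$ is a homomorphism of cochain complexes from $\{\bigoplus_{n\ge1}\mathrm{Hom}(A^{\otimes n},A),d_N\}$ to $\{\bigoplus_{n\ge1}\mathcal{O}_A(n+1),\delta_{\pi_N}\}$, and it induces homomorphisms $\Theta:H^n(N)\to H^{n+1}_{\mathrm{NS}}(A_{\mathrm{NS}})$.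
   Context: A Nijenhuis operator on $(A,\cdot)$ is a linear $N$ with $N(a)N(b)=N(N(a)b+aN(b)-N(ab))$. The map $d_N:\mathrm{Hom}(A^{\otimes n},A)\to\mathrm{Hom}(A^{\otimes n+1},A)$ is, for $n\ge1$, $(d_Nf)(a_1,\dots,a_{n+1})=N(a_1)\cdot f(a_2,\dots,a_{n+1})-(-1)^nf(a_1,\dots,a_n)\cdot N(a_{n+1})+\sum_{i=1}^n(-1)^if(a_1,\dots,a_{i-1},N(a_i)a_{i+1}+a_iN(a_{i+1})-N(a_ia_{i+1}),\dots,a_{n+1})-N\big((\delta_{\mathrm{Hoch}}f)(a_1,\dots,a_{n+1})\big)$, where $(\delta_{\mathrm{Hoch}}f)(a_1,\dots,a_{n+1})=a_1f(a_2,\dots,a_{n+1})+\sum_{i=1}^n(-1)^if(a_1,\dots,a_ia_{i+1},\dots,a_{n+1})+(-1)^{n+1}f(a_1,\dots,a_n)a_{n+1}$; and on $A=\mathrm{Hom}(A^{\otimes0},A)$, $d_N(a)(b)=N(b)a-aN(b)-N(ba-ab)$. Then $d_N^2=0$ and $H^\bullet(N)$ denotes the cohomology of $\{\bigoplus_{n\ge0}\mathrm{Hom}(A^{\otimes n},A),d_N\}$. Let $C_n=\{[1],\dots,[n]\}$ be formal symbols. $\mathcal{O}_A(1)=\mathrm{Hom}(\mathbf{k}[C_1]\otimes A,A)$ and $\mathcal{O}_A(n)=\mathrm{Hom}(\mathbf{k}[C_{n+1}]\otimes A^{\otimes n},A)$ for $n\ge2$. For $f\in\mathcal{O}_A(m)$,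 $g\in\mathcal{O}_A(n)$ with $m,n\ge2$ and $1\le i\le m$, write $G_*=\sum_{j=1}^{n+1}g([j];a_i,\dots,a_{i+n-1})$; then $f\circ_ig\in\mathcal{O}_A(m+n-1)$ is: for $1\le r\le i-1$, $f([r];a_1,\dots,a_{i-1},G_*,a_{i+n},\dots,a_{m+n-1})$; for $i\le r\le i+n-1$, $f([i];a_1,\dots,a_{i-1},g([r-i+1];a_i,\dots,a_{i+n-1}),\dots,a_{m+n-1})$; for $i+n\le r\le m+n-1$, $f([r-n+1];a_1,\dots,a_{i-1},G_*,\dots,a_{m+n-1})$; for $r=m+n$, $f([i];\dots,g([n+1];a_i,\dots,a_{i+n-1}),\dots)+f([m+1];\dots,G_*,\dots)$. Set $[\![f,g]\!]=\sum_{i=1}^m(-1)^{(i-1)(n-1)}f\circ_ig-(-1)^{(m-1)(n-1)}\sum_{i=1}^n(-1)^{(i-1)(m-1)}g\circ_if$ and, for an NS-algebra structure $\pi\in\mathcal{O}_A(2)$, $\delta_\pi(f)=(-1)^{n-1}[\![\pi,f]\!]$ for $f\in\mathcal{O}_A(n)$. $H^\bullet_{\mathrm{NS}}$ is the cohomology of $\{\bigoplus_{n\ge1}\mathcal{O}_A(n),\delta_\pi\}$; $A_{\mathrm{NS}}$ is the NS-algebra $(A,\prec_N,\succ_N,\curlyvee_N)$ with $a\prec_Nb=a\cdot N(b)$, $a\succ_Nb=N(a)\cdot b$, $a\curlyvee_Nb=-N(a\cdot b)$, corresponding to $\pi=\pi_N$. *)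

theory Defs
  imports Main "HOL.Vector_Spaces"
begin

text \<open>The algebra A is a type 'a of class ring (associative,
  distributive, not necessarily unital) which is a module over a field 'k of
  characteristic 0 via scale, with multiplication k-bilinear.
  An element of Hom(A tensor n, A) is a function 'a list \<Rightarrow> 'a, k-multilinear
  on lists of length n (a_1,...,a_n is the list whose (j-1)-th entry is a_j).
  An element of O_A(n) (n \<ge> 2) is a function nat \<Rightarrow> 'a list \<Rightarrow> 'a, where the
  first argument r \<in> {1..n+1} is the formal symbol [r].\<close>

definition sgnp :: "nat \<Rightarrow> 'a::ab_group_add \<Rightarrow> 'a" where
  "sgnp n x = (if even n then x else - x)"

definition multilinear_on ::
  "('k \<Rightarrow> 'a \<Rightarrow> 'a) \<Rightarrow> nat \<Rightarrow> ('a::ab_group_add list \<Rightarrow> 'a) \<Rightarrow> bool" where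
  "multilinear_on scale n f \<longleftrightarrow>
     (\<forall>as i x y c. length as = n \<and> i < n \<longrightarrow>
        f (as[i := x + y]) = f (as[i := x]) + f (as[i := y]) \<and>
        f (as[i := scale c x]) = scale c (f (as[i := x])))"

definition linear_map :: "('k \<Rightarrow> 'a \<Rightarrow> 'a) \<Rightarrow> ('a::ab_group_add \<Rightarrow> 'a) \<Rightarrow> bool" where
  "linear_map scale N \<longleftrightarrow> (\<forall>x y c. N (x + y) = N x + N y \<and> N (scale c x) = scale c (N x))"

definition bilinear_mult :: "('k \<Rightarrow> 'a \<Rightarrow> 'a) \<Rightarrow> ('a::ring) itself \<Rightarrow> bool" where
  "bilinear_mult scale _ \<longleftrightarrow>
     (\<forall>c x y. scale c (x * y) = scale c x * y \<and> scale c (x * y) = x * scale c y)"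

definition nijenhuis :: "('a::ring \<Rightarrow> 'a) \<Rightarrow> bool" where
  "nijenhuis N \<longleftrightarrow> (\<forall>a b. N a * N b = N (N a * b + a * N b - N (a * b)))"

text \<open>Replace the entries a_i, a_(i+1) (1-based, 1 \<le> i) by h a_i a_(i+1).\<close>
definition merge2 :: "('a \<Rightarrow> 'a \<Rightarrow> 'a) \<Rightarrow> nat \<Rightarrow> 'a list \<Rightarrow> 'a list" where
  "merge2 h i as = take (i - 1) as @ [h (as ! (i - 1)) (as ! i)] @ drop (i + 1) as"

text \<open>Hochschild coboundary of f of arity n (argument list of length n+1).\<close>
definition hoch :: "nat \<Rightarrow> ('a::ring list \<Rightarrow> 'a) \<Rightarrow> 'a list \<Rightarrow> 'a" where
  "hoch n f as = hd as * f (tl as)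
     + (\<Sum>i=1..n. sgnp i (f (merge2 (*) i as)))
     + sgnp (n + 1) (f (butlast as) * last as)"

definition dN :: "('a::ring \<Rightarrow> 'a) \<Rightarrow> nat \<Rightarrow> ('a list \<Rightarrow> 'a) \<Rightarrow> 'a list \<Rightarrow> 'a" where
  "dN N n f as = N (hd as) * f (tl as)
     - sgnp n (f (butlast as) * N (last as))
     + (\<Sum>i=1..n. sgnp i (f (merge2 (\<lambda>a b. N a * b + a * N b - N (a * b)) i as)))
     - N (hoch n f as)"

definition ocomp :: "nat \<Rightarrow> nat \<Rightarrow> (nat \<Rightarrow> 'a list \<Rightarrow> 'a) \<Rightarrow> nat
     \<Rightarrow> (nat \<Rightarrow> 'a list \<Rightarrow> 'a::ab_group_add) \<Rightarrow> nat \<Rightarrow> 'a list \<Rightarrow> 'a" where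
  "ocomp m n f i g r as =
     (let B = take n (drop (i - 1) as);
          G = (\<Sum>j=1..n+1. g j B);
          subst = (\<lambda>x. take (i - 1) as @ [x] @ drop (i - 1 + n) as)
      in if r \<le> i - 1 then f r (subst G)
         else if r \<le> i + n - 1 then f i (subst (g (r - i + 1) B))
         else if r \<le> m + n - 1 then f (r - n + 1) (subst G)
         else f i (subst (g (n + 1) B)) + f (m + 1) (subst G))"

definition obracket :: "nat \<Rightarrow> nat \<Rightarrow> (nat \<Rightarrow> 'a list \<Rightarrow> 'a)
     \<Rightarrow> (nat \<Rightarrow> 'a list \<Rightarrow> 'a::ab_group_add) \<Rightarrow> nat \<Rightarrow> 'a list \<Rightarrow> 'a" where
  "obracket m n f g r as =
     (\<Sum>i=1..m. sgnp ((i - 1) * (n - 1)) (ocomp m n f i g r as))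
     - sgnp ((m - 1) * (n - 1)) (\<Sum>i=1..n. sgnp ((i - 1) * (m - 1)) (ocomp n m g i f r as))"

definition odelta :: "(nat \<Rightarrow> 'a list \<Rightarrow> 'a) \<Rightarrow> nat
     \<Rightarrow> (nat \<Rightarrow> 'a list \<Rightarrow> 'a::ab_group_add) \<Rightarrow> nat \<Rightarrow> 'a list \<Rightarrow> 'a" where
  "odelta pi n f r as = sgnp (n - 1) (obracket 2 n pi f r as)"

definition piN :: "('a::ring \<Rightarrow> 'a) \<Rightarrow> nat \<Rightarrow> 'a list \<Rightarrow> 'a" where
  "piN N r as = (let a = as ! 0; b = as ! 1 in
     if r = 1 then a * N b else if r = 2 then N a * b
     else if r = 3 then - N (a * b) else 0)"

definition Theta :: "nat \<Rightarrow> ('a::ring list \<Rightarrow> 'a) \<Rightarrow> nat \<Rightarrow> 'a list \<Rightarrow> 'a" where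
  "Theta n f r as =
     (if r = 1 then sgnp (n + 1) (hd as * f (tl as))
      else if 2 \<le> r \<and> r \<le> n then 0
      else if r = n + 1 then f (butlast as) * last as
      else if r = n + 2 then (\<Sum>i=1..n. sgnp (n + i + 1) (f (merge2 (*) i as)))
      else 0)"

end

theory Submission
  imports Defs
begin

text \<open>Both sides are compared symbol by symbol. Since \<open>\<pi>\<^sub>N\<close> is binary, the only
  compositions occurring in \<open>\<delta>\<^sub>\<pi>(\<Theta>\<^sub>n f)\<close> are \<open>\<pi>\<^sub>N \<circ>\<^sub>1 \<Theta>\<^sub>n f\<close>, \<open>\<pi>\<^sub>N \<circ>\<^sub>2 \<Theta>\<^sub>n f\<close> and
  \<open>\<Theta>\<^sub>n f \<circ>\<^sub>i \<pi>\<^sub>N\<close>; moreover \<open>\<Theta>\<^sub>n f\<close> lives on the symbols \<open>[1]\<close>, \<open>[n+1]\<close>, \<open>[n+2]\<close>,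
  and its components add up to \<open>\<plusminus>\<delta>\<^sub>H\<^sub>o\<^sub>c\<^sub>h f\<close>. For the symbols up to \<open>[n+2]\<close> the two
  sides then agree after expansion. For \<open>[n+3]\<close> the left side contains a double sum in which
  neighbouring arguments are merged first by the deformed product
  \<open>a \<cdot>\<^sub>N b = N(a)b + aN(b) - N(ab)\<close> and then by the product, the right side the same double
  sum with the two merges in the opposite order. By the simplicial identity the two double sums
  add up to terms merging three neighbouring arguments at once, and these cancel because
  \<open>\<cdot>\<^sub>N\<close> is a Hochschild 2-cocycle for the product and \<open>f\<close> is additive in each argument.
  The terms with \<open>N(\<delta>\<^sub>H\<^sub>o\<^sub>c\<^sub>h f)\<close> are matched using \<open>\<delta>\<^sub>H\<^sub>o\<^sub>c\<^sub>h\<^sup>2 = 0\<close>.\<close>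

lemma sgnp_0 [simp]: "sgnp 0 x = x"
  by (simp add: sgnp_def)

lemma sgnp_Suc [simp]: "sgnp (Suc n) x = - sgnp n x"
  by (simp add: sgnp_def)

lemma sgnp_add [simp]: "sgnp (m + n) x = sgnp m (sgnp n x)"
  by (simp add: sgnp_def)

lemma sgnp_minus [simp]: "sgnp n (- x) = - sgnp n x"
  by (simp add: sgnp_def)

lemma sgnp_plus [simp]: "sgnp n (x + y) = sgnp n x + sgnp n y"
  by (simp add: sgnp_def)

lemma sgnp_diff [simp]: "sgnp n (x - y) = sgnp n x - sgnp n y"
  by (simp add: sgnp_def)

lemma sgnp_zero [simp]: "sgnp n 0 = 0"
  by (simp add: sgnp_def)

lemma sgnp_sgnp [simp]: "sgnp n (sgnp n x) = x"
  by (simp add: sgnp_def)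

lemma sgnp_mult_left [simp]: "sgnp n (x :: 'a::ring) * y = sgnp n (x * y)"
  by (simp add: sgnp_def)

lemma sgnp_mult_right [simp]: "(x :: 'a::ring) * sgnp n y = sgnp n (x * y)"
  by (simp add: sgnp_def)

lemma sgnp_sum: "sgnp n (sum g A) = (\<Sum>i\<in>A. sgnp n (g i))"
  by (simp add: sgnp_def sum_negf)

lemma sgnp_commute: "sgnp m (sgnp n x) = sgnp n (sgnp m x)"
  by (simp add: sgnp_def)

lemma sgnp_pred: "0 < i \<Longrightarrow> sgnp (i - Suc 0) x = - sgnp i x"
  by (cases i) simp_all

lemma (in additive) sgnp: "f (sgnp n x) = sgnp n (f x)"
  by (simp add: sgnp_def minus)

lemma merge2_append: "i = Suc (length xs) \<Longrightarrow> merge2 h i (xs @ a # b # ys) = xs @ h a b # ys"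
  by (simp add: merge2_def nth_append)

lemma drop_conv_nth_Cons_Cons:
  "Suc i < length as \<Longrightarrow> drop i as = as ! i # as ! Suc i # drop (Suc (Suc i)) as"
  by (simp add: Cons_nth_drop_Suc)

lemma list_split_pair:
  assumes "1 \<le> i" "i < length as"
  obtains xs a b ys where "as = xs @ a # b # ys" "i = Suc (length xs)"
proof
  have "drop (i - 1) as = as ! (i - 1) # as ! i # drop (Suc i) as"
    using assms drop_conv_nth_Cons_Cons[of "i - 1" as] by simp
  then show "as = take (i - 1) as @ as ! (i - 1) # as ! i # drop (Suc i) as"
    by (metis append_take_drop_id)
qed (use assms in simp)

lemma list_split_triple:
  assumes "1 \<le> j" "j + 1 < length as"
  obtains xs a b c ys where "as = xs @ a # b # c # ys" "j = Suc (length xs)"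
proof
  have "drop (j - 1) as = as ! (j - 1) # as ! j # as ! Suc j # drop (Suc (Suc j)) as"
    using assms drop_conv_nth_Cons_Cons[of "j - 1" as] Cons_nth_drop_Suc[of "Suc j" as] by simp
  then show "as = take (j - 1) as @ as ! (j - 1) # as ! j # as ! Suc j # drop (Suc (Suc j)) as"
    by (metis append_take_drop_id)
qed (use assms in simp)

definition merge3 :: "('a \<Rightarrow> 'a \<Rightarrow> 'a \<Rightarrow> 'a) \<Rightarrow> nat \<Rightarrow> 'a list \<Rightarrow> 'a list" where
  "merge3 t j as = take (j - 1) as @ [t (as ! (j - 1)) (as ! j) (as ! (j + 1))] @ drop (j + 2) as"

lemma merge3_append:
  "j = Suc (length xs) \<Longrightarrow> merge3 t j (xs @ a # b # c # ys) = xs @ t a b c # ys"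
  by (simp add: merge3_def nth_append)

lemma merge2_merge2_disjoint:
  assumes "1 \<le> k" "k + 2 \<le> i" "i < length as"
  shows "merge2 h1 k (merge2 h2 i as) = merge2 h2 (i - 1) (merge2 h1 k as)"
proof -
  obtain xs a b ys where as: "as = xs @ a # b # ys" and k: "k = Suc (length xs)"
    by (rule list_split_pair[of k as]) (use assms in auto)
  obtain us c d vs where ys: "ys = us @ c # d # vs" and i: "i - k - 1 = Suc (length us)"
    by (rule list_split_pair[of "i - k - 1" ys]) (use assms as k in auto)
  have i': "i = Suc (length (xs @ a # b # us))" "i - 1 = Suc (length (xs @ h1 a b # us))"
    using i k assms by auto
  have "merge2 h1 k (merge2 h2 i as) = xs @ h1 a b # us @ h2 c d # vs"
    unfolding as ys using merge2_append[OF i'(1)] merge2_append[OF k] by simp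
  moreover have "merge2 h2 (i - 1) (merge2 h1 k as) = xs @ h1 a b # us @ h2 c d # vs"
    unfolding as ys using merge2_append[OF i'(2)] merge2_append[OF k] by simp
  ultimately show ?thesis by simp
qed

lemma merge2_merge2_left:
  assumes "1 \<le> k" "k + 1 < length as"
  shows "merge2 h1 k (merge2 h2 k as) = merge3 (\<lambda>x y z. h1 (h2 x y) z) k as"
proof -
  obtain xs a b c ys where "as = xs @ a # b # c # ys" "k = Suc (length xs)"
    using list_split_triple[OF assms] .
  then show ?thesis by (simp add: merge2_append merge3_append)
qed

lemma merge2_merge2_right:
  assumes "1 \<le> k" "k + 1 < length as"
  shows "merge2 h1 k (merge2 h2 (Suc k) as) = merge3 (\<lambda>x y z. h1 x (h2 y z)) k as"
proof -
  obtain xs a b c ys where "as = xs @ a # b # c # ys" "k = Suc (length xs)"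
    using list_split_triple[OF assms] .
  then show ?thesis
    using merge2_append[of "Suc k" "xs @ [a]" h2 b c ys] by (simp add: merge2_append merge3_append)
qed

lemma hd_merge2_Suc_0: "2 \<le> length as \<Longrightarrow> hd (merge2 h (Suc 0) as) = h (hd as) (as ! 1)"
  by (cases as) (auto simp: merge2_def hd_conv_nth)

lemma tl_merge2_Suc_0: "2 \<le> length as \<Longrightarrow> tl (merge2 h (Suc 0) as) = drop 2 as"
  by (cases as) (auto simp: merge2_def)

lemma hd_merge2: "2 \<le> i \<Longrightarrow> i < length as \<Longrightarrow> hd (merge2 h i as) = hd as"
  by (cases as) (auto simp: merge2_def)

lemma tl_merge2: "2 \<le> i \<Longrightarrow> i < length as \<Longrightarrow> tl (merge2 h i as) = merge2 h (i - 1) (tl as)"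
  by (cases as) (auto simp: merge2_def nth_Cons' take_Cons' drop_Cons' split: if_splits)

lemma butlast_merge2:
  "1 \<le> i \<Longrightarrow> i + 1 < length as \<Longrightarrow> butlast (merge2 h i as) = merge2 h i (butlast as)"
  by (simp add: merge2_def butlast_append nth_butlast drop_butlast take_butlast)

lemma last_merge2: "1 \<le> i \<Longrightarrow> i + 1 < length as \<Longrightarrow> last (merge2 h i as) = last as"
  by (simp add: merge2_def last_append)

lemma butlast_merge2_last_pair:
  "length as = n + 2 \<Longrightarrow> butlast (merge2 h (Suc n) as) = take n as"
  by (simp add: merge2_def butlast_append)

lemma last_merge2_last_pair:
  assumes "length as = n + 2"
  shows "last (merge2 h (Suc n) as) = h (as ! n) (last as)"
proof -
  have "last as = as ! Suc n"
    using assms by (subst last_conv_nth) auto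
  then show ?thesis
    using assms by (simp add: merge2_def)
qed

lemma sum_split_first_shift: "(\<Sum>i=1..n+1. g i) = g 1 + (\<Sum>k=1..n. g (Suc k))"
proof -
  have "(\<Sum>i=1..n+1. g i) = g 1 + (\<Sum>i=Suc 1..Suc n. g i)"
    by (subst sum.atLeast_Suc_atMost) auto
  then show ?thesis
    by (simp only: sum.shift_bounds_cl_Suc_ivl)
qed

lemma sum_merge2_hd_tl:
  assumes "length as = n + 2"
  shows "(\<Sum>i=1..n+1. sgnp i (\<phi> (hd (merge2 h i as)) (tl (merge2 h i as))))
       = - \<phi> (h (hd as) (as ! 1)) (drop 2 as) - (\<Sum>k=1..n. sgnp k (\<phi> (hd as) (merge2 h k (tl as))))"
proof -
  have "sgnp (Suc k) (\<phi> (hd (merge2 h (Suc k) as)) (tl (merge2 h (Suc k) as)))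
      = - sgnp k (\<phi> (hd as) (merge2 h k (tl as)))" if "k \<in> {1..n}" for k
    using that assms by (simp add: hd_merge2 tl_merge2)
  then show ?thesis
    unfolding sum_split_first_shift using assms
    by (simp add: hd_merge2_Suc_0 tl_merge2_Suc_0 sum_negf)
qed

lemma sum_merge2_butlast_last:
  assumes "length as = n + 2"
  shows "(\<Sum>i=1..n+1. sgnp i (\<psi> (butlast (merge2 h i as)) (last (merge2 h i as))))
       = (\<Sum>k=1..n. sgnp k (\<psi> (merge2 h k (butlast as)) (last as)))
         + sgnp (n + 1) (\<psi> (take n as) (h (as ! n) (last as)))"
proof -
  have "(\<Sum>i=1..n. sgnp i (\<psi> (butlast (merge2 h i as)) (last (merge2 h i as))))
      = (\<Sum>k=1..n. sgnp k (\<psi> (merge2 h k (butlast as)) (last as)))"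
    using assms by (intro sum.cong) (simp_all add: butlast_merge2 last_merge2)
  then show ?thesis
    using assms by (simp add: butlast_merge2_last_pair last_merge2_last_pair)
qed

section \<open>The simplicial identity for iterated merges\<close>

definition double_merge_sum ::
  "('a list \<Rightarrow> 'b::ab_group_add) \<Rightarrow> ('a \<Rightarrow> 'a \<Rightarrow> 'a) \<Rightarrow> ('a \<Rightarrow> 'a \<Rightarrow> 'a) \<Rightarrow> nat \<Rightarrow> 'a list \<Rightarrow> 'b"
where
  "double_merge_sum g h1 h2 L as =
     (\<Sum>i=1..L+1. \<Sum>k=1..L. sgnp (i + k) (g (merge2 h1 k (merge2 h2 i as))))"

lemma sum_merge2_merge2_lower_upper:
  assumes "length as = L + 2"
  shows "(\<Sum>(i, k)\<in>{(i, k). 1 \<le> k \<and> k + 2 \<le> i \<and> i \<le> L + 1}.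
            sgnp (i + k) (g (merge2 h1 k (merge2 h2 i as))))
       = - (\<Sum>(i, k)\<in>{(i, k). 1 \<le> i \<and> i + 1 \<le> k \<and> k \<le> L}.
            sgnp (i + k) (g (merge2 h2 k (merge2 h1 i as))))"
proof -
  \<comment> \<open>Merges at non-overlapping positions commute, the later position moving down by one; this
    shift is what flips the sign.\<close>
  have "sgnp (i + k) (g (merge2 h1 k (merge2 h2 i as)))
      = - sgnp (k + (i - 1)) (g (merge2 h2 (i - 1) (merge2 h1 k as)))"
    if "1 \<le> k" "k + 2 \<le> i" "i \<le> L + 1" for i k
  proof -
    have "merge2 h1 k (merge2 h2 i as) = merge2 h2 (i - 1) (merge2 h1 k as)"
      using that assms by (intro merge2_merge2_disjoint) auto
    moreover have "i + k = Suc (k + (i - 1))"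
      using that by simp
    ultimately show ?thesis
      by (simp only: sgnp_Suc)
  qed
  then show ?thesis
    unfolding sum_negf[symmetric]
    by (intro sum.reindex_bij_witness[where j = "\<lambda>(i, k). (k, i - 1)"
          and i = "\<lambda>(i, k). (k + 1, i)"])
      (auto simp del: sgnp_add)
qed

lemma double_merge_sum_split:
  assumes "length as = L + 2"
  shows "double_merge_sum g h1 h2 L as
     = (\<Sum>(i, k)\<in>{(i, k). 1 \<le> k \<and> k + 2 \<le> i \<and> i \<le> L + 1}.
          sgnp (i + k) (g (merge2 h1 k (merge2 h2 i as))))
       + (\<Sum>(i, k)\<in>{(i, k). 1 \<le> i \<and> i + 1 \<le> k \<and> k \<le> L}.
          sgnp (i + k) (g (merge2 h1 k (merge2 h2 i as))))
       + (\<Sum>j=1..L. g (merge3 (\<lambda>x y z. h1 (h2 x y) z) j as)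
                   - g (merge3 (\<lambda>x y z. h1 x (h2 y z)) j as))"
    (is "_ = sum ?t ?lower + sum ?t ?upper + _")
proof -
  let ?diag = "(\<lambda>k. (k, k)) ` {1..L}"
  let ?subdiag = "(\<lambda>k. (k + 1, k)) ` {1..L}"
  have decomp: "{1..L+1} \<times> {1..L} = ((?lower \<union> ?upper) \<union> ?subdiag) \<union> ?diag"
    by (auto simp: image_iff)
  have "finite ?lower" "finite ?upper"
    by (rule finite_subset[of _ "{1..L+1} \<times> {1..L}"]; auto)+
  then have "double_merge_sum g h1 h2 L as
      = sum ?t ?lower + sum ?t ?upper + sum ?t ?subdiag + sum ?t ?diag"
    unfolding double_merge_sum_def sum.cartesian_product decomp
    by (subst sum.union_disjoint, auto)+
  moreover have "sum ?t ?subdiag = (\<Sum>j=1..L. - g (merge3 (\<lambda>x y z. h1 x (h2 y z)) j as))"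
    using assms
    by (subst sum.reindex) (auto simp: inj_on_def sgnp_def merge2_merge2_right intro!: sum.cong)
  moreover have "sum ?t ?diag = (\<Sum>j=1..L. g (merge3 (\<lambda>x y z. h1 (h2 x y) z) j as))"
    using assms
    by (subst sum.reindex) (auto simp: inj_on_def sgnp_def merge2_merge2_left intro!: sum.cong)
  ultimately show ?thesis
    by (simp add: sum_subtractf sum_negf)
qed

lemma double_merge_sum_assoc:
  assumes "length as = L + 2" and "\<And>x y z. h (h x y) z = h x (h y z)"
  shows "double_merge_sum g h h L as = 0"
  using double_merge_sum_split[OF assms(1), of g h h]
    sum_merge2_merge2_lower_upper[OF assms(1), of g h h] assms(2)
  by simp

lemma double_merge_sum_swap:
  assumes "length as = L + 2"
  shows "double_merge_sum g h1 h2 L as + double_merge_sum g h2 h1 L as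
     = (\<Sum>j=1..L. g (merge3 (\<lambda>x y z. h1 (h2 x y) z) j as)
                 - g (merge3 (\<lambda>x y z. h1 x (h2 y z)) j as)
                 + g (merge3 (\<lambda>x y z. h2 (h1 x y) z) j as)
                 - g (merge3 (\<lambda>x y z. h2 x (h1 y z)) j as))"
  unfolding double_merge_sum_split[OF assms, of g h1 h2]
    double_merge_sum_split[OF assms, of g h2 h1]
    sum_merge2_merge2_lower_upper[OF assms, of g h1 h2]
    sum_merge2_merge2_lower_upper[OF assms, of g h2 h1]
  by (simp add: sum.distrib sum_subtractf)

definition multiadditive_on :: "nat \<Rightarrow> ('a::ab_group_add list \<Rightarrow> 'b::ab_group_add) \<Rightarrow> bool" where
  "multiadditive_on n f \<longleftrightarrow>
     (\<forall>as i x y. length as = n \<and> i < n \<longrightarrow> f (as[i := x + y]) = f (as[i := x]) + f (as[i := y]))"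

lemma multilinear_on_imp_multiadditive_on: "multilinear_on scale n f \<Longrightarrow> multiadditive_on n f"
  by (simp add: multilinear_on_def multiadditive_on_def)

lemma multiadditive_on_merge3:
  assumes "multiadditive_on n f" "length as = n + 2" "1 \<le> j" "j \<le> n"
  shows "f (merge3 (\<lambda>x y z. t x y z + t' x y z) j as) = f (merge3 t j as) + f (merge3 t' j as)"
proof -
  have merge3_update: "merge3 t j as
      = (take (j - 1) as @ 0 # drop (j + 2) as)[j - 1 := t (as ! (j - 1)) (as ! j) (as ! (j + 1))]"
    for t :: "'a \<Rightarrow> 'a \<Rightarrow> 'a \<Rightarrow> 'a"
    using assms by (simp add: merge3_def list_update_append)
  show ?thesis
    using assms unfolding merge3_update multiadditive_on_def by simp
qed

lemma double_merge_sum_cocycle: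
  fixes c :: "'a::ring \<Rightarrow> 'a \<Rightarrow> 'a"
  assumes "multiadditive_on L g" "length as = L + 2"
    and cocycle: "\<And>x y z. c (x * y) z + c x y * z = c x (y * z) + x * c y z"
  shows "double_merge_sum g c (*) L as + double_merge_sum g (*) c L as = 0"
proof -
  have "g (merge3 (\<lambda>x y z. c (x * y) z) j as) + g (merge3 (\<lambda>x y z. c x y * z) j as)
      = g (merge3 (\<lambda>x y z. c x (y * z)) j as) + g (merge3 (\<lambda>x y z. x * c y z) j as)"
    if "j \<in> {1..L}" for j
    using that
      multiadditive_on_merge3[OF assms(1,2), of j "\<lambda>x y z. c (x * y) z" "\<lambda>x y z. c x y * z"]
      multiadditive_on_merge3[OF assms(1,2), of j "\<lambda>x y z. c x (y * z)" "\<lambda>x y z. x * c y z"]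
    by (simp add: cocycle)
  then show ?thesis
    unfolding double_merge_sum_swap[OF assms(2)]
    by (intro sum.neutral) (auto simp: algebra_simps)
qed

section \<open>The Hochschild coboundary squares to zero\<close>

lemma list_ends_of_length:
  assumes "length as = n + 2"
  shows "hd (tl as) = as ! 1" "tl (tl as) = drop 2 as" "last (tl as) = last as"
    "butlast (tl as) = tl (butlast as)" "hd (butlast as) = hd as"
    "butlast (butlast as) = take n as" "last (butlast as) = as ! n"
proof -
  obtain x y ys where as: "as = x # y # ys" and "length ys = n"
    using assms by (cases as; cases "tl as") auto
  then show "hd (tl as) = as ! 1" "tl (tl as) = drop 2 as" "last (tl as) = last as"
    "butlast (tl as) = tl (butlast as)" "hd (butlast as) = hd as"
    "butlast (butlast as) = take n as" "last (butlast as) = as ! n"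
    by (auto simp: butlast_conv_take last_conv_nth nth_Cons' take_Cons')
qed

lemma hoch_hoch:
  fixes f :: "'a::ring list \<Rightarrow> 'a"
  assumes "length as = n + 2"
  shows "hoch (Suc n) (hoch n f) as = 0"
proof -
  let ?M = "\<lambda>i. merge2 (*) i as"
  have "(\<Sum>i=1..n+1. sgnp i (hoch n f (?M i)))
      = (\<Sum>i=1..n+1. sgnp i (hd (?M i) * f (tl (?M i))))
        + double_merge_sum f (*) (*) n as
        + (\<Sum>i=1..n+1. sgnp i (sgnp (n + 1) (f (butlast (?M i)) * last (?M i))))"
    unfolding hoch_def double_merge_sum_def by (simp only: sgnp_plus sgnp_add sgnp_sum sum.distrib)
  also have "\<dots> = - (hd as * as ! 1) * f (drop 2 as)
        - (\<Sum>k=1..n. sgnp k (hd as * f (merge2 (*) k (tl as))))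
        + (\<Sum>k=1..n. sgnp k (sgnp (n + 1) (f (merge2 (*) k (butlast as)) * last as)))
        + f (take n as) * (as ! n * last as)"
    using sum_merge2_hd_tl[OF assms, of "\<lambda>x bs. x * f bs" "(*)"]
      sum_merge2_butlast_last[OF assms, of "\<lambda>bs z. sgnp (n + 1) (f bs * z)" "(*)"]
      double_merge_sum_assoc[OF assms, of "(*)" f]
    by (simp add: mult.assoc)
  finally show ?thesis
    using assms
    by (simp add: hoch_def list_ends_of_length sum_distrib_left sum_distrib_right sgnp_sum
        sgnp_commute sum_negf algebra_simps)
qed

lemma ocomp_binary_left:
  assumes "length as = n + 2" "1 \<le> r"
  shows "ocomp 2 (n + 1) P 1 F r as =
    (if r \<le> n + 1 then P 1 [F r (butlast as), last as]
     else if r = n + 2 then P 2 [(\<Sum>j=1..n+2. F j (butlast as)), last as]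
     else P 1 [F (n + 2) (butlast as), last as] + P 3 [(\<Sum>j=1..n+2. F j (butlast as)), last as])"
proof -
  have "take (Suc n) as = butlast as" "drop (Suc n) as = [last as]"
    using assms by (simp_all add: butlast_conv_take) (cases as rule: rev_cases; simp)
  then show ?thesis
    using assms unfolding ocomp_def Let_def by (simp add: numeral_2_eq_2 numeral_3_eq_3)
qed

lemma ocomp_binary_right:
  assumes "length as = n + 2" "1 \<le> r"
  shows "ocomp 2 (n + 1) P 2 F r as =
    (if r = 1 then P 1 [hd as, (\<Sum>j=1..n+2. F j (tl as))]
     else if r \<le> n + 2 then P 2 [hd as, F (r - 1) (tl as)]
     else P 2 [hd as, F (n + 2) (tl as)] + P 3 [hd as, (\<Sum>j=1..n+2. F j (tl as))])"
proof -
  have "take (Suc n) (drop 1 as) = tl as" "take 1 as = [hd as]" "drop (Suc (Suc n)) as = []"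
    using assms by (simp_all add: drop_Suc) (cases as; simp)
  moreover have "2 \<le> r \<Longrightarrow> Suc (r - 2) = r - 1"
    by arith
  ultimately show ?thesis
    using assms unfolding ocomp_def Let_def by auto
qed

lemma ocomp_binary_inner:
  assumes "length as = n + 2" "1 \<le> i" "i \<le> n + 1"
  shows "ocomp (n + 1) 2 F i P r as =
    (if r \<le> i - 1 then F r (merge2 (\<lambda>a b. \<Sum>j=1..3. P j [a, b]) i as)
     else if r \<le> i + 1 then F i (merge2 (\<lambda>a b. P (r - i + 1) [a, b]) i as)
     else if r \<le> n + 2 then F (r - 1) (merge2 (\<lambda>a b. \<Sum>j=1..3. P j [a, b]) i as)
     else F i (merge2 (\<lambda>a b. P 3 [a, b]) i as)
          + F (n + 2) (merge2 (\<lambda>a b. \<Sum>j=1..3. P j [a, b]) i as))"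
proof -
  have pair: "take 2 (drop (i - 1) as) = [as ! (i - 1), as ! i]"
    using assms by (simp add: take_Suc_conv_app_nth numeral_2_eq_2)
  have arith: "i - 1 + 2 = i + 1" "i + 2 - 1 = i + 1" "n + 1 + 2 - 1 = n + 2" "2 + 1 = (3::nat)"
    "\<not> r \<le> i + 1 \<Longrightarrow> r - 2 + 1 = r - 1"
    using assms by auto
  have subst: "take (i - 1) as @ [x] @ drop (i + 1) as = merge2 (\<lambda>a b. x) i as" for x
    by (simp add: merge2_def)
  have pointwise: "merge2 (\<lambda>a b. h [as ! (i - 1), as ! i]) i as = merge2 (\<lambda>a b. h [a, b]) i as"
    for h :: "'a list \<Rightarrow> 'a"
    by (simp add: merge2_def)
  show ?thesis
    unfolding ocomp_def Let_def pair arith(1-4) subst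
    unfolding pointwise[of "\<lambda>x. \<Sum>j=1..3. P j x"] pointwise[of "P 3"] pointwise[of "P (r - i + 1)"]
    using arith(5) by simp
qed

lemma odelta_binary:
  "odelta P (n + 1) F r as =
     sgnp n (ocomp 2 (n + 1) P 1 F r as) + ocomp 2 (n + 1) P 2 F r as
     - (\<Sum>i=1..n+1. sgnp (i - 1) (ocomp (n + 1) 2 F i P r as))"
  by (simp add: odelta_def obracket_def numeral_2_eq_2)

lemma sum_Theta_eq_hoch:
  assumes "1 \<le> n"
  shows "(\<Sum>j=1..n+2. Theta n f j bs) = sgnp (n + 1) (hoch n f bs)"
proof -
  have "(\<Sum>j=1..n+2. Theta n f j bs)
      = Theta n f 1 bs + (\<Sum>j=2..n. Theta n f j bs) + Theta n f (n + 1) bs + Theta n f (n + 2) bs"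
    using assms by (simp add: sum.atLeast_Suc_atMost numeral_2_eq_2)
  moreover have "(\<Sum>j=2..n. Theta n f j bs) = 0"
    by (simp add: Theta_def)
  ultimately show ?thesis
    using assms by (simp add: Theta_def hoch_def sgnp_sum sgnp_commute[of n] algebra_simps)
qed

abbreviation deformed_mult :: "('a::ring \<Rightarrow> 'a) \<Rightarrow> 'a \<Rightarrow> 'a \<Rightarrow> 'a" where
  "deformed_mult N \<equiv> \<lambda>a b. N a * b + a * N b - N (a * b)"

lemma sum_piN: "(\<lambda>a b. \<Sum>j=1..3. piN N j [a, b]) = deformed_mult N"
  by (auto simp: piN_def numeral_3_eq_3 numeral_2_eq_2 algebra_simps)

lemma deformed_mult_cocycle:
  "deformed_mult N (x * y) z + deformed_mult N x y * z
    = deformed_mult N x (y * z) + x * deformed_mult N y z"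
  by (simp add: algebra_simps)

section \<open>Comparison symbol by symbol\<close>

context
  fixes N :: "'a::ring \<Rightarrow> 'a"
  assumes additive_N: "additive N"
begin

interpretation N: additive N
  by (fact additive_N)

declare N.add [simp] N.diff [simp] N.minus [simp] N.zero [simp] N.sgnp [simp]

lemma odelta_Theta_first:
  assumes len: "length as = n + 2" and n: "1 \<le> n"
  shows "odelta (piN N) (n + 1) (Theta n f) 1 as = Theta (n + 1) (dN N n f) 1 as"
proof -
  have left: "ocomp 2 (n + 1) (piN N) 1 (Theta n f) 1 as
      = sgnp (n + 1) (hd as * f (tl (butlast as))) * N (last as)"
    using ocomp_binary_left[OF len, of 1] list_ends_of_length[OF len]
    by (simp add: piN_def Theta_def)
  have right: "ocomp 2 (n + 1) (piN N) 2 (Theta n f) 1 as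
      = hd as * N (sgnp (n + 1) (hoch n f (tl as)))"
    using ocomp_binary_right[OF len, of 1 "piN N" "Theta n f"] unfolding sum_Theta_eq_hoch[OF n]
    by (simp add: piN_def)
  have inner_first: "ocomp (n + 1) 2 (Theta n f) 1 (piN N) 1 as
      = sgnp (n + 1) ((hd as * N (as ! 1)) * f (drop 2 as))"
    using ocomp_binary_inner[OF len, of 1 "Theta n f" "piN N" 1] len
    by (simp add: piN_def Theta_def hd_merge2_Suc_0 tl_merge2_Suc_0)
  have inner_rest: "ocomp (n + 1) 2 (Theta n f) (Suc k) (piN N) 1 as
      = sgnp (n + 1) (hd as * f (merge2 (deformed_mult N) k (tl as)))" if "k \<in> {1..n}" for k
    using that ocomp_binary_inner[OF len, of "Suc k" "Theta n f" "piN N" 1] len unfolding sum_piN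
    by (simp add: Theta_def hd_merge2 tl_merge2)
  have "(\<Sum>k=1..n. sgnp (Suc k - 1) (ocomp (n + 1) 2 (Theta n f) (Suc k) (piN N) 1 as))
      = (\<Sum>k=1..n. sgnp k (sgnp (n + 1) (hd as * f (merge2 (deformed_mult N) k (tl as)))))"
    using inner_rest by (intro sum.cong) auto
  then have inner: "(\<Sum>i=1..n+1. sgnp (i - 1) (ocomp (n + 1) 2 (Theta n f) i (piN N) 1 as))
      = sgnp (n + 1) ((hd as * N (as ! 1)) * f (drop 2 as))
        + (\<Sum>k=1..n. sgnp k (sgnp (n + 1) (hd as * f (merge2 (deformed_mult N) k (tl as)))))"
    unfolding sum_split_first_shift inner_first by simp
  show ?thesis
    unfolding odelta_binary left right inner
    using list_ends_of_length[OF len]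
    by (simp add: Theta_def dN_def sum_negf sgnp_sum sum.distrib algebra_simps sum_distrib_left
        sgnp_commute)
qed

lemma ocomp_Theta_piN_middle:
  assumes len: "length as = n + 2" and r: "2 \<le> r" "r \<le> n + 1" and i: "1 \<le> i" "i \<le> n + 1"
  shows "ocomp (n + 1) 2 (Theta n f) i (piN N) r as
    = (if i = 1 then if r = 2 then sgnp (n + 1) ((N (hd as) * as ! 1) * f (drop 2 as)) else 0
       else 0)
      + (if i = n + 1 then if r = n + 1 then f (take n as) * (as ! n * N (last as)) else 0
         else 0)"
proof -
  have inner: "ocomp (n + 1) 2 (Theta n f) i (piN N) r as =
    (if r \<le> i - 1 then Theta n f r (merge2 (deformed_mult N) i as)
     else if r \<le> i + 1 then Theta n f i (merge2 (\<lambda>a b. piN N (r - i + 1) [a, b]) i as)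
     else Theta n f (r - 1) (merge2 (deformed_mult N) i as))"
    using ocomp_binary_inner[OF len i, of "Theta n f" "piN N" r] r unfolding sum_piN by simp
  consider "i = 1" | "2 \<le> i" "i \<le> n" | "i = n + 1"
    using i by linarith
  then show ?thesis
  proof cases
    case 1
    then show ?thesis
      unfolding inner using r len by (auto simp: Theta_def piN_def hd_merge2_Suc_0 tl_merge2_Suc_0)
  next
    case 2
    then show ?thesis
      unfolding inner using r by (auto simp: Theta_def)
  next
    case 3
    then show ?thesis
      unfolding inner using r len
      by (auto simp: Theta_def piN_def butlast_merge2_last_pair last_merge2_last_pair)
  qed
qed

lemma odelta_Theta_middle:
  assumes len: "length as = n + 2" and n: "1 \<le> n" and r: "2 \<le> r" "r \<le> n + 1"
  shows "odelta (piN N) (n + 1) (Theta n f) r as = Theta (n + 1) (dN N n f) r as"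
proof -
  have left: "ocomp 2 (n + 1) (piN N) 1 (Theta n f) r as
      = (if r = n + 1 then f (take n as) * as ! n * N (last as) else 0)"
    using ocomp_binary_left[OF len, of r "piN N" "Theta n f"] list_ends_of_length[OF len] r
    by (simp add: piN_def Theta_def)
  have right: "ocomp 2 (n + 1) (piN N) 2 (Theta n f) r as
      = (if r = 2 then N (hd as) * sgnp (n + 1) (as ! 1 * f (drop 2 as)) else 0)"
    using ocomp_binary_right[OF len, of r "piN N" "Theta n f"] list_ends_of_length[OF len] r
    by (auto simp: piN_def Theta_def)
  have inner: "(\<Sum>i=1..n+1. sgnp (i - 1) (ocomp (n + 1) 2 (Theta n f) i (piN N) r as))
      = (if r = 2 then sgnp (n + 1) ((N (hd as) * as ! 1) * f (drop 2 as)) else 0)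
        + (if r = n + 1 then sgnp n (f (take n as) * (as ! n * N (last as))) else 0)"
  proof -
    have "(\<Sum>i=1..n+1. sgnp (i - 1) (ocomp (n + 1) 2 (Theta n f) i (piN N) r as))
      = (\<Sum>i=1..n+1.
          (if i = 1 then if r = 2 then sgnp (n + 1) ((N (hd as) * as ! 1) * f (drop 2 as)) else 0
           else 0)
          + (if i = n + 1
             then sgnp n (if r = n + 1 then f (take n as) * (as ! n * N (last as)) else 0)
             else 0))"
      using ocomp_Theta_piN_middle[OF len r] n by (intro sum.cong) auto
    then show ?thesis
      by (simp add: sum.distrib)
  qed
  have "Theta (n + 1) (dN N n f) r as = 0"
    using r by (simp add: Theta_def)
  then show ?thesis
    unfolding odelta_binary left right inner using r by (auto simp: algebra_simps)
qed

lemma odelta_Theta_penultimate: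
  assumes len: "length as = n + 2" and n: "1 \<le> n"
  shows "odelta (piN N) (n + 1) (Theta n f) (n + 2) as = Theta (n + 1) (dN N n f) (n + 2) as"
proof -
  have left: "ocomp 2 (n + 1) (piN N) 1 (Theta n f) (n + 2) as
      = N (sgnp (n + 1) (hoch n f (butlast as))) * last as"
    using ocomp_binary_left[OF len, of "n + 2" "piN N" "Theta n f"]
    unfolding sum_Theta_eq_hoch[OF n] by (simp add: piN_def)
  have right: "ocomp 2 (n + 1) (piN N) 2 (Theta n f) (n + 2) as
      = N (hd as) * (f (tl (butlast as)) * last as)"
    using ocomp_binary_right[OF len, of "n + 2" "piN N" "Theta n f"] list_ends_of_length[OF len] n
    by (simp add: piN_def Theta_def)
  have inner: "ocomp (n + 1) 2 (Theta n f) i (piN N) (n + 2) as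
      = f (merge2 (deformed_mult N) i (butlast as)) * last as" if "1 \<le> i" "i \<le> n" for i
  proof -
    have "\<not> n + 2 \<le> i - 1" "\<not> n + 2 \<le> i + 1"
      using that by auto
    then show ?thesis
      using ocomp_binary_inner[OF len, of i "Theta n f" "piN N" "n + 2"] that len unfolding sum_piN
      by (simp add: Theta_def butlast_merge2 last_merge2)
  qed
  have inner_last: "ocomp (n + 1) 2 (Theta n f) (n + 1) (piN N) (n + 2) as
      = f (take n as) * (N (as ! n) * last as)"
    using ocomp_binary_inner[OF len, of "n + 1" "Theta n f" "piN N" "n + 2"] len n
    by (simp add: Theta_def piN_def butlast_merge2_last_pair last_merge2_last_pair)
  have "(\<Sum>i=1..n. sgnp (i - 1) (ocomp (n + 1) 2 (Theta n f) i (piN N) (n + 2) as))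
      = (\<Sum>i=1..n. - sgnp i (f (merge2 (deformed_mult N) i (butlast as)) * last as))"
    using inner by (intro sum.cong) (auto simp: sgnp_pred)
  then have "(\<Sum>i=1..n+1. sgnp (i - 1) (ocomp (n + 1) 2 (Theta n f) i (piN N) (n + 2) as))
      = (\<Sum>i=1..n. - sgnp i (f (merge2 (deformed_mult N) i (butlast as)) * last as))
        + sgnp n (f (take n as) * (N (as ! n) * last as))"
    using inner_last by simp
  then show ?thesis
    unfolding odelta_binary left right using list_ends_of_length[OF len]
    by (simp add: Theta_def dN_def sum_negf sgnp_sum algebra_simps sum_distrib_right)
qed

lemma Theta_dN_last:
  assumes len: "length as = n + 2"
  shows "Theta (n + 1) (dN N n f) (n + 3) as
    = sgnp n (f (take n as) * N (as ! n * last as) - N (hd as * as ! 1) * f (drop 2 as)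
              + double_merge_sum f (deformed_mult N) (*) n as + N (hd as * hoch n f (tl as))
              - (\<Sum>k=1..n. sgnp k (N (hd as) * f (merge2 (*) k (tl as)))))
      + N (hoch n f (butlast as) * last as)
      - (\<Sum>k=1..n. sgnp k (f (merge2 (*) k (butlast as)) * N (last as)))"
    (is "_ = ?rhs")
proof -
  let ?M = "\<lambda>i. merge2 (*) i as"
  have hoch_merge2: "(\<Sum>i=1..n+1. sgnp i (hoch n f (?M i)))
      = - (hd as * hoch n f (tl as)) - sgnp n (hoch n f (butlast as) * last as)"
    using hoch_hoch[OF len, of f] unfolding hoch_def[of "Suc n" "hoch n f"]
    by (simp add: algebra_simps eq_neg_iff_add_eq_0 add_eq_0_iff2)
  have "Theta (n + 1) (dN N n f) (n + 3) as = (\<Sum>i=1..n+1. sgnp (n + i) (dN N n f (?M i)))"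
    by (simp add: Theta_def)
  also have "\<dots> = sgnp n ((\<Sum>i=1..n+1. sgnp i (N (hd (?M i)) * f (tl (?M i))))
      - (\<Sum>i=1..n+1. sgnp i (sgnp n (f (butlast (?M i)) * N (last (?M i)))))
      + double_merge_sum f (deformed_mult N) (*) n as
      - N (\<Sum>i=1..n+1. sgnp i (hoch n f (?M i))))"
    unfolding dN_def double_merge_sum_def
    by (simp only: sgnp_add sgnp_plus sgnp_diff sgnp_sum sum.distrib sum_subtractf N.sum N.sgnp)
  also have "\<dots> = ?rhs"
    unfolding hoch_merge2 sum_merge2_hd_tl[OF len, of "\<lambda>x bs. N x * f bs"]
      sum_merge2_butlast_last[OF len, of "\<lambda>bs z. sgnp n (f bs * N z)"]
    using list_ends_of_length[OF len]
    by (simp add: sgnp_sum sum_negf sgnp_commute[of n] algebra_simps)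
  finally show ?thesis .
qed

lemma sum_ocomp_Theta_piN_last:
  assumes len: "length as = n + 2" and n: "1 \<le> n"
  shows "(\<Sum>i=1..n+1. sgnp (i - 1) (ocomp (n + 1) 2 (Theta n f) i (piN N) (n + 3) as))
    = sgnp n (N (hd as * as ! 1) * f (drop 2 as) - f (take n as) * N (as ! n * last as)
              + double_merge_sum f (*) (deformed_mult N) n as)"
proof -
  let ?g = "\<lambda>i. sgnp (i - 1) (Theta n f i (merge2 (\<lambda>a b. - N (a * b)) i as))"
  have inner: "ocomp (n + 1) 2 (Theta n f) i (piN N) (n + 3) as
      = Theta n f i (merge2 (\<lambda>a b. - N (a * b)) i as)
        + Theta n f (n + 2) (merge2 (deformed_mult N) i as)"
    if "1 \<le> i" "i \<le> n + 1" for i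
  proof -
    have "\<not> n + 3 \<le> i - 1" "\<not> n + 3 \<le> i + 1" "\<not> n + 3 \<le> n + 2"
      using that by auto
    then show ?thesis
      using ocomp_binary_inner[OF len that, of "Theta n f" "piN N" "n + 3"] unfolding sum_piN
      by (simp add: piN_def)
  qed
  have "(\<Sum>i=1..n+1. ?g i) = ?g 1 + (\<Sum>i=2..n. ?g i) + ?g (n + 1)"
    using n by (simp add: sum.atLeast_Suc_atMost numeral_2_eq_2)
  also have "\<dots> = sgnp n (N (hd as * as ! 1) * f (drop 2 as))
      - sgnp n (f (take n as) * N (as ! n * last as))"
    using len n by (simp add: Theta_def hd_merge2_Suc_0 tl_merge2_Suc_0 butlast_merge2_last_pair
        last_merge2_last_pair)
  finally have first: "(\<Sum>i=1..n+1. ?g i) = \<dots>" .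
  have second: "(\<Sum>i=1..n+1. sgnp (i - 1) (Theta n f (n + 2) (merge2 (deformed_mult N) i as)))
      = sgnp n (double_merge_sum f (*) (deformed_mult N) n as)"
    unfolding double_merge_sum_def Theta_def sgnp_sum
    by (intro sum.cong) (auto simp: sgnp_pred sgnp_sum sgnp_commute)
  have "(\<Sum>i=1..n+1. sgnp (i - 1) (ocomp (n + 1) 2 (Theta n f) i (piN N) (n + 3) as))
      = (\<Sum>i=1..n+1. ?g i + sgnp (i - 1) (Theta n f (n + 2) (merge2 (deformed_mult N) i as)))"
    using inner by (intro sum.cong) auto
  then show ?thesis
    unfolding sum.distrib first second by simp
qed

lemma odelta_Theta_last:
  assumes len: "length as = n + 2" and n: "1 \<le> n" and f: "multiadditive_on n f"
  shows "odelta (piN N) (n + 1) (Theta n f) (n + 3) as = Theta (n + 1) (dN N n f) (n + 3) as"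
proof -
  have left: "ocomp 2 (n + 1) (piN N) 1 (Theta n f) (n + 3) as
      = Theta n f (n + 2) (butlast as) * N (last as)
        - N (sgnp (n + 1) (hoch n f (butlast as)) * last as)"
    using ocomp_binary_left[OF len, of "n + 3" "piN N" "Theta n f"]
    unfolding sum_Theta_eq_hoch[OF n] by (simp add: piN_def)
  have right: "ocomp 2 (n + 1) (piN N) 2 (Theta n f) (n + 3) as
      = N (hd as) * Theta n f (n + 2) (tl as) - N (hd as * sgnp (n + 1) (hoch n f (tl as)))"
    using ocomp_binary_right[OF len, of "n + 3" "piN N" "Theta n f"]
    unfolding sum_Theta_eq_hoch[OF n] by (simp add: piN_def)
  have "sgnp n (double_merge_sum f (*) (deformed_mult N) n as)
      + sgnp n (double_merge_sum f (deformed_mult N) (*) n as) = 0"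
    using double_merge_sum_cocycle[OF f len deformed_mult_cocycle[of N]]
    by (simp only: sgnp_plus[symmetric] add.commute sgnp_zero)
  then show ?thesis
    unfolding odelta_binary left right sum_ocomp_Theta_piN_last[OF len n] Theta_dN_last[OF len]
    by (simp add: Theta_def sgnp_sum sum_distrib_left sum_distrib_right sgnp_commute[of n] sum_negf
        algebra_simps)
qed

end

theorem proposition2p16:
  fixes scale :: "'k::field_char_0 \<Rightarrow> 'a::ring \<Rightarrow> 'a"
    and N :: "'a \<Rightarrow> 'a" and f :: "'a list \<Rightarrow> 'a" and n :: nat
  assumes "vector_space scale"
    and "bilinear_mult scale TYPE('a)"
    and "linear_map scale N"
    and "nijenhuis N"
    and "n \<ge> 1"
    and "multilinear_on scale n f"
  shows "\<forall>r \<in> {1..n+3}. \<forall>as. length as = n + 2 \<longrightarrow>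
           odelta (piN N) (n + 1) (Theta n f) r as = Theta (n + 1) (dN N n f) r as"
proof (intro ballI allI impI)
  fix r and as :: "'a list"
  assume r: "r \<in> {1..n+3}" and len: "length as = n + 2"
  have N: "additive N"
    using assms(3) by unfold_locales (simp add: linear_map_def)
  have f: "multiadditive_on n f"
    using assms(6) by (rule multilinear_on_imp_multiadditive_on)
  consider "r = 1" | "2 \<le> r" "r \<le> n + 1" | "r = n + 2" | "r = n + 3"
    using r by fastforce
  then show "odelta (piN N) (n + 1) (Theta n f) r as = Theta (n + 1) (dN N n f) r as"
    by cases (use odelta_Theta_first[OF N len assms(5)] odelta_Theta_middle[OF N len assms(5)]
        odelta_Theta_penultimate[OF N len assms(5)] odelta_Theta_last[OF N len assms(5) f]
        in simp_all)
qed

end
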